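(* In the errorless symmetric relay network described in the context, under the greedy policy $G$ the AoI reductions satisfy, for every time slot $t\ge1$, \[ R(\mathcal{S}^{G}(t))=\min\{tS,K\},\qquad R(\mathcal{U}^{G}(t))=\min\{(t-1)U,K\}. \]
   Context: Fix integers $K\ge 2$ and $S,U$ with $1\le S<K$, $1\le U<K$, and $S=U$. There are $K$ processes indexed by $k\in\{1,\dots,K\}$ and time slots $t=1,2,\dots$. The state at time $t$ consists of relay AoI values $g_k(t)$ and destination AoI values $h_k(t)$, with $g_k(1)=h_k(1)=1$ for all $k$. A policy $\pi$ is a map assigning to the current state a pair $(\mathcal{S}^{\pi}(t),\mathcal{U}^{\pi}(t))$ of subsets of $\{1,\dots,K\}$ with $|\mathcal{S}^{\pi}(t)|=S$ and $|\mathcal{U}^{\pi}(t)|=U$. Errorless dynamics: $g_k(t+1)=1$ if $k\in\mathcal{S}(t)$, else $g_k(t+1)=g_k(t)+1$; $h_k(t+1)=g_k(t)+1$ if $k\in\mathcal{U}(t)$, else $h_k(t+1)=h_k(t)+1$. Define $R(\mathcal{S}^{\pi}(\tau))=\sum_{k\in\mathcal{S}^{\pi}(\tau)} g_k^{\pi}(\tau)$ and $R(\mathcal{U}^{\pi}(\tau))=\sum_{k\in\mathcal{U}^{\pi}(\tau)}(h_k^{\pi}(\tau)-g_k^{\pi}(\tau))$. The greedy policy $G$ chooses at each time $t$ a set $\mathcal{S}^G(t)$ of $S$ indices with the largest values $g_k(t)$ (maximizing $\sum_{k\in\mathcal{S}}g_k(t)$ over $|\mathcal{S}|=S$) and a set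 $\mathcal{U}^G(t)$ of $U$ indices with the largest gaps $h_k(t)-g_k(t)$ (maximizing $\sum_{k\in\mathcal{U}}(h_k(t)-g_k(t))$ over $|\mathcal{U}|=U$). *)

theory Defs
  imports Main
begin

text \<open>A state is a pair (g, h) of relay AoI and destination AoI vectors,
  indexed by processes k (only k in {1..K} are relevant).
  A policy maps the current state to a pair (S-set, U-set).\<close>

type_synonym state = "(nat \<Rightarrow> int) \<times> (nat \<Rightarrow> int)"
type_synonym policy = "state \<Rightarrow> nat set \<times> nat set"

definition step :: "policy \<Rightarrow> state \<Rightarrow> state" where
  "step pol st =
     (let (g, h) = st; (Ss, Us) = pol st in
      ((\<lambda>k. if k \<in> Ss then 1 else g k + 1),
       (\<lambda>k. if k \<in> Us then g k + 1 else h k + 1)))"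

text \<open>aoi pol n is the state at time slot t = n + 1 (so aoi pol 0 is time 1,
  where g_k(1) = h_k(1) = 1).\<close>
primrec aoi :: "policy \<Rightarrow> nat \<Rightarrow> state" where
  "aoi pol 0 = ((\<lambda>_. 1), (\<lambda>_. 1))"
| "aoi pol (Suc n) = step pol (aoi pol n)"

definition state_at :: "policy \<Rightarrow> nat \<Rightarrow> state" where
  "state_at pol t = aoi pol (t - 1)"

definition Sset :: "policy \<Rightarrow> nat \<Rightarrow> nat set" where
  "Sset pol t = fst (pol (state_at pol t))"

definition Uset :: "policy \<Rightarrow> nat \<Rightarrow> nat set" where
  "Uset pol t = snd (pol (state_at pol t))"

definition R_S :: "policy \<Rightarrow> nat \<Rightarrow> int" where
  "R_S pol t = (\<Sum>k\<in>Sset pol t. fst (state_at pol t) k)"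

definition R_U :: "policy \<Rightarrow> nat \<Rightarrow> int" where
  "R_U pol t = (\<Sum>k\<in>Uset pol t. snd (state_at pol t) k - fst (state_at pol t) k)"

definition greedy :: "nat \<Rightarrow> nat \<Rightarrow> nat \<Rightarrow> policy \<Rightarrow> bool" where
  "greedy K S U pol \<longleftrightarrow>
     (\<forall>g h. let (Ss, Us) = pol (g, h) in
        Ss \<subseteq> {1..K} \<and> card Ss = S \<and>
        (\<forall>A. A \<subseteq> {1..K} \<and> card A = S \<longrightarrow> (\<Sum>k\<in>A. g k) \<le> (\<Sum>k\<in>Ss. g k)) \<and>
        Us \<subseteq> {1..K} \<and> card Us = U \<and>
        (\<forall>A. A \<subseteq> {1..K} \<and> card A = U \<longrightarrow>
              (\<Sum>k\<in>A. h k - g k) \<le> (\<Sum>k\<in>Us. h k - g k)))"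

end

theory Submission
  imports Defs
begin

text \<open>Under the greedy policy the relay ages form a staircase: at time \<open>n + 1\<close> exactly
  \<open>K - (a - 1) S\<close> processes have relay age at least \<open>a\<close>, because each step resets the \<open>S\<close>
  oldest ones and ages the rest. Summing the top \<open>S\<close> ages level by level gives
  \<open>R(S(t)) = min (t S) K\<close>. The gap \<open>h - g\<close> after a step equals the old relay age on the set
  just sampled and vanishes elsewhere, so it has at most \<open>S = U\<close> nonzero entries, all of
  which the greedy update set collects; hence \<open>R(U(t + 1))\<close> is the total gap, i.e. \<open>R(S(t))\<close>.\<close>

lemma max_sum_subset_dominates:
  fixes f :: "'a \<Rightarrow> 'b::ordered_ab_group_add"
  assumes "finite I" and "B \<subseteq> I"
    and max: "\<forall>A. A \<subseteq> I \<and> card A = card B \<longrightarrow> sum f A \<le> sum f B"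
    and "k \<in> B" and "j \<in> I - B"
  shows "f j \<le> f k"
proof -
  let ?A = "insert j (B - {k})"
  have "finite B" using assms(1,2) finite_subset by blast
  moreover have "card B > 0" using assms(4) \<open>finite B\<close> card_gt_0_iff by blast
  ultimately have "card ?A = card B" and "sum f ?A = f j + (sum f B - f k)"
    using assms(4,5) by (simp_all add: card_Diff_singleton sum_diff1)
  moreover have "?A \<subseteq> I" using assms(2,4,5) by blast
  ultimately show ?thesis using max by (metis add_le_cancel_right diff_add_cancel add.commute)
qed

lemma card_superlevel_in_dominating:
  fixes f :: "'a \<Rightarrow> 'b::linorder"
  assumes "finite I" and "A \<subseteq> I" and dom: "\<forall>k\<in>A. \<forall>j\<in>I - A. f j \<le> f k"
  shows "card {k\<in>A. b \<le> f k} = min (card A) (card {k\<in>I. b \<le> f k})"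
proof (cases "\<forall>k\<in>A. b \<le> f k")
  case True
  then have "A \<subseteq> {k\<in>I. b \<le> f k}" using assms(2) by blast
  then have "card A \<le> card {k\<in>I. b \<le> f k}" using assms(1) by (simp add: card_mono)
  moreover have "{k\<in>A. b \<le> f k} = A" using True by blast
  ultimately show ?thesis by simp
next
  case False
  then obtain k where "k \<in> A" "f k < b" by (auto simp: not_le)
  then have "{k\<in>I. b \<le> f k} = {k\<in>A. b \<le> f k}" using dom assms(2) by force
  moreover have "card {k\<in>A. b \<le> f k} \<le> card A"
    using assms(1,2) finite_subset by (intro card_mono) auto
  ultimately show ?thesis by simp
qed

lemma sum_eq_sum_card_superlevels:
  fixes g :: "'a \<Rightarrow> int"
  assumes "finite A" and bounds: "\<forall>k\<in>A. 0 \<le> g k \<and> g k \<le> int M"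
  shows "sum g A = int (\<Sum>a\<in>{1..M}. card {k\<in>A. int a \<le> g k})"
proof -
  have "int (\<Sum>a\<in>{1..M}. card {k\<in>A. int a \<le> g k})
      = (\<Sum>a\<in>{1..M}. \<Sum>k\<in>A. if int a \<le> g k then 1 else 0)"
    using assms(1) by (simp add: sum.If_cases Int_def)
  also have "\<dots> = (\<Sum>k\<in>A. \<Sum>a\<in>{1..M}. if int a \<le> g k then 1 else 0)"
    by (rule sum.swap)
  also have "\<dots> = sum g A"
  proof (rule sum.cong)
    fix k assume "k \<in> A"
    then have "{a\<in>{1..M}. int a \<le> g k} = {1..nat (g k)}" and "0 \<le> g k"
      using bounds by (auto simp: le_nat_iff)
    then show "(\<Sum>a\<in>{1..M}. if int a \<le> g k then 1 else 0) = g k"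
      by (simp add: sum.If_cases Int_def)
  qed simp
  finally show ?thesis ..
qed

lemma sum_min_staircase: "(\<Sum>a\<in>{1..m}. min S (K - (a - 1) * S)) = min (m * S) (K::nat)"
proof (induction m)
  case (Suc m)
  then have "(\<Sum>a\<in>{1..Suc m}. min S (K - (a - 1) * S)) = min (m * S) K + min S (K - m * S)"
    by simp
  also have "\<dots> = min (Suc m * S) K" by (cases "m * S \<le> K") auto
  finally show ?case .
qed simp

lemma greedy_selects_top_sets:
  assumes "greedy K S U G"
  shows "fst (G st) \<subseteq> {1..K}" "card (fst (G st)) = S"
    "\<forall>k\<in>fst (G st). \<forall>j\<in>{1..K} - fst (G st). fst st j \<le> fst st k"
    and "snd (G st) \<subseteq> {1..K}" "card (snd (G st)) = U"
    "\<forall>k\<in>snd (G st). \<forall>j\<in>{1..K} - snd (G st).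
       snd st j - fst st j \<le> snd st k - fst st k"
proof -
  obtain g h Ss Us where st: "st = (g, h)" and sel: "G (g, h) = (Ss, Us)" by fastforce
  then have Ss: "Ss \<subseteq> {1..K}" "card Ss = S"
      "\<forall>A. A \<subseteq> {1..K} \<and> card A = card Ss \<longrightarrow> sum g A \<le> sum g Ss"
    and Us: "Us \<subseteq> {1..K}" "card Us = U"
      "\<forall>A. A \<subseteq> {1..K} \<and> card A = card Us \<longrightarrow> (\<Sum>k\<in>A. h k - g k) \<le> (\<Sum>k\<in>Us. h k - g k)"
    using assms[unfolded greedy_def, rule_format, of g h] by (simp_all add: Let_def)
  show "fst (G st) \<subseteq> {1..K}" "card (fst (G st)) = S"
    "snd (G st) \<subseteq> {1..K}" "card (snd (G st)) = U"
    using Ss Us st sel by simp_all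
  show "\<forall>k\<in>fst (G st). \<forall>j\<in>{1..K} - fst (G st). fst st j \<le> fst st k"
    using max_sum_subset_dominates[OF _ Ss(1,3)] st sel by simp
  show "\<forall>k\<in>snd (G st). \<forall>j\<in>{1..K} - snd (G st).
      snd st j - fst st j \<le> snd st k - fst st k"
    using max_sum_subset_dominates[OF _ Us(1,3)] st sel by simp
qed

lemma step_components:
  "fst (step pol st) = (\<lambda>k. if k \<in> fst (pol st) then 1 else fst st k + 1)"
  "snd (step pol st) = (\<lambda>k. if k \<in> snd (pol st) then fst st k + 1 else snd st k + 1)"
  unfolding step_def by (simp_all add: case_prod_beta)

text \<open>The subtraction is truncated: levels with \<open>(a - 1) S \<ge> K\<close> are empty.\<close>

definition relay_staircase :: "nat \<Rightarrow> nat \<Rightarrow> nat \<Rightarrow> (nat \<Rightarrow> int) \<Rightarrow> bool" where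
  "relay_staircase K S n g \<longleftrightarrow>
     (\<forall>k\<in>{1..K}. 1 \<le> g k \<and> g k \<le> int (n + 1)) \<and>
     (\<forall>a\<in>{1..n + 1}. card {k\<in>{1..K}. int a \<le> g k} = K - (a - 1) * S)"

lemma sum_top_set_staircase:
  assumes stair: "relay_staircase K S n g" and A: "A \<subseteq> {1..K}" "card A = S"
    and dom: "\<forall>k\<in>A. \<forall>j\<in>{1..K} - A. g j \<le> g k"
  shows "sum g A = int (min ((n + 1) * S) K)"
proof -
  have "\<forall>k\<in>A. 0 \<le> g k \<and> g k \<le> int (n + 1)"
    using stair A(1) unfolding relay_staircase_def by fastforce
  then have "sum g A = int (\<Sum>a\<in>{1..n + 1}. card {k\<in>A. int a \<le> g k})"
    using A(1) finite_subset by (blast intro: sum_eq_sum_card_superlevels)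
  also have "(\<Sum>a\<in>{1..n + 1}. card {k\<in>A. int a \<le> g k})
      = (\<Sum>a\<in>{1..n + 1}. min S (K - (a - 1) * S))"
  proof (rule sum.cong)
    fix a assume "a \<in> {1..n + 1}"
    then show "card {k\<in>A. int a \<le> g k} = min S (K - (a - 1) * S)"
      using card_superlevel_in_dominating[OF _ A(1) dom] stair A(2)
      unfolding relay_staircase_def by simp
  qed simp
  also have "\<dots> = min ((n + 1) * S) K" by (rule sum_min_staircase)
  finally show ?thesis .
qed

lemma staircase_reset_top_set:
  assumes stair: "relay_staircase K S n g" and A: "A \<subseteq> {1..K}" "card A = S"
    and dom: "\<forall>k\<in>A. \<forall>j\<in>{1..K} - A. g j \<le> g k"
  shows "relay_staircase K S (n + 1) (\<lambda>k. if k \<in> A then 1 else g k + 1)"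
    (is "relay_staircase K S (n + 1) ?g'")
proof -
  have bounds: "\<forall>k\<in>{1..K}. 1 \<le> g k \<and> g k \<le> int (n + 1)"
    and levels: "\<forall>a\<in>{1..n + 1}. card {k\<in>{1..K}. int a \<le> g k} = K - (a - 1) * S"
    using stair unfolding relay_staircase_def by blast+
  have "card {k\<in>{1..K}. int a \<le> ?g' k} = K - (a - 1) * S" if a: "a \<in> {1..n + 2}" for a
  proof (cases "a = 1")
    case True
    then have "{k\<in>{1..K}. int a \<le> ?g' k} = {1..K}" using bounds by auto
    then show ?thesis using True by simp
  next
    case False
    then obtain b where b: "a = b + 1" "b \<in> {1..n + 1}" using a by (cases a) auto
    let ?L = "{k\<in>{1..K}. int b \<le> g k}"
    have "{k\<in>{1..K}. int a \<le> ?g' k} = ?L - {k\<in>A. int b \<le> g k}" using b by auto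
    moreover have "{k\<in>A. int b \<le> g k} \<subseteq> ?L" using A(1) by blast
    ultimately have "card {k\<in>{1..K}. int a \<le> ?g' k} = card ?L - card {k\<in>A. int b \<le> g k}"
      by (simp add: card_Diff_subset finite_subset)
    also have "\<dots> = card ?L - min S (card ?L)"
      using card_superlevel_in_dominating[OF _ A(1) dom] A(2) by simp
    also have "\<dots> = K - (a - 1) * S"
      using levels b by (simp add: min_def diff_diff_left algebra_simps)
    finally show ?thesis .
  qed
  moreover have "\<forall>k\<in>{1..K}. 1 \<le> ?g' k \<and> ?g' k \<le> int (n + 2)" using bounds by auto
  ultimately show ?thesis unfolding relay_staircase_def by simp
qed

lemma relay_staircase_aoi:
  assumes "greedy K S U G"
  shows "relay_staircase K S n (fst (aoi G n))"
proof (induction n)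
  case 0
  have "{k\<in>{1..K}. int a \<le> (1::int)} = {1..K}" if "a \<in> {1..0 + 1}" for a
    using that by auto
  then show ?case unfolding relay_staircase_def by simp
next
  case (Suc n)
  then show ?case
    using staircase_reset_top_set greedy_selects_top_sets(1-3)[OF assms]
    by (simp add: step_components)
qed

lemma gaps_vanish_outside_top_set:
  fixes d :: "'a \<Rightarrow> 'b::{zero, linorder}"
  assumes "finite I" and "B \<subseteq> I" and nonneg: "\<forall>k\<in>I. 0 \<le> d k"
    and sparse: "card {k\<in>I. d k \<noteq> 0} \<le> card B"
    and dom: "\<forall>k\<in>B. \<forall>j\<in>I - B. d j \<le> d k"
  shows "\<forall>j\<in>I - B. d j = 0"
proof (rule ccontr)
  assume "\<not> ?thesis"
  then obtain j where j: "j \<in> I - B" "d j \<noteq> 0" by blast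
  then have "0 < d j" using nonneg by (simp add: order_neq_le_trans)
  then have "0 < d k" if "k \<in> B" for k using dom that j(1) less_le_trans by blast
  then have "insert j B \<subseteq> {k\<in>I. d k \<noteq> 0}" using j assms(2) by fastforce
  then have "card (insert j B) \<le> card {k\<in>I. d k \<noteq> 0}" using assms(1) by (simp add: card_mono)
  moreover have "card (insert j B) = card B + 1"
    using j assms(1,2) finite_subset by fastforce
  ultimately show False using sparse by simp
qed

lemma gap_after_step:
  assumes "\<forall>j\<in>{1..K} - snd (pol st). snd st j = fst st j" and "k \<in> {1..K}"
  shows "snd (step pol st) k - fst (step pol st) k = (if k \<in> fst (pol st) then fst st k else 0)"
  using assms by (auto simp: step_components)

lemma aoi_gaps_vanish_outside_selection:
  assumes "greedy K S S G"
  shows "\<forall>j\<in>{1..K} - snd (G (aoi G n)). snd (aoi G n) j = fst (aoi G n) j"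
proof (induction n)
  case 0
  show ?case by simp
next
  case (Suc n)
  let ?st = "aoi G n" and ?d = "\<lambda>k. snd (aoi G (Suc n)) k - fst (aoi G (Suc n)) k"
  have gap: "?d k = (if k \<in> fst (G ?st) then fst ?st k else 0)" if "k \<in> {1..K}" for k
    using gap_after_step[where pol = G and st = ?st, OF Suc that] by simp
  let ?B' = "snd (G (aoi G (Suc n)))"
  have nonneg: "\<forall>k\<in>{1..K}. 0 \<le> ?d k"
    using gap relay_staircase_aoi[OF assms, of n] unfolding relay_staircase_def by fastforce
  have fin: "finite (fst (G ?st))"
    using greedy_selects_top_sets(1)[OF assms] by (meson finite_atLeastAtMost finite_subset)
  have "{k\<in>{1..K}. ?d k \<noteq> 0} \<subseteq> fst (G ?st)"
  proof
    fix k assume "k \<in> {k\<in>{1..K}. ?d k \<noteq> 0}"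
    then show "k \<in> fst (G ?st)" using gap[of k] by (metis (mono_tags) mem_Collect_eq)
  qed
  then have "card {k\<in>{1..K}. ?d k \<noteq> 0} \<le> card (fst (G ?st))"
    by (rule card_mono[OF fin])
  then have sparse: "card {k\<in>{1..K}. ?d k \<noteq> 0} \<le> card ?B'"
    using greedy_selects_top_sets(2,5)[OF assms] by simp
  have "\<forall>j\<in>{1..K} - ?B'. ?d j = 0"
    by (rule gaps_vanish_outside_top_set[OF _ greedy_selects_top_sets(4)[OF assms] nonneg sparse
          greedy_selects_top_sets(6)[OF assms]]) simp
  then show ?case by simp
qed

lemma aoi_total_gap:
  assumes "greedy K S S G"
  shows "(\<Sum>k\<in>{1..K}. snd (aoi G n) k - fst (aoi G n) k) = int (min (n * S) K)"
proof (cases n)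
  case (Suc m)
  let ?st = "aoi G m"
  have "(\<Sum>k\<in>{1..K}. snd (aoi G n) k - fst (aoi G n) k)
      = (\<Sum>k\<in>{1..K}. if k \<in> fst (G ?st) then fst ?st k else 0)"
    using gap_after_step[where pol = G and st = ?st, OF aoi_gaps_vanish_outside_selection[OF assms]]
      Suc by simp
  also have "\<dots> = sum (fst ?st) (fst (G ?st))"
    using greedy_selects_top_sets(1)[OF assms] by (simp add: sum.If_cases Int_absorb1)
  also have "\<dots> = int (min (n * S) K)"
    using sum_top_set_staircase[OF relay_staircase_aoi] greedy_selects_top_sets(1-3) assms Suc
    by simp
  finally show ?thesis .
qed simp

theorem proposition3:
  fixes K S U :: nat and G :: policy
  assumes "K \<ge> 2" and "1 \<le> S" and "S < K" and "1 \<le> U" and "U < K" and "S = U"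
    and "greedy K S U G"
    and "t \<ge> 1"
  shows "R_S G t = int (min (t * S) K) \<and> R_U G t = int (min ((t - 1) * U) K)"
proof -
  have greedy: "greedy K S S G" using assms(6,7) by simp
  obtain n where t: "t = n + 1" and st: "state_at G t = aoi G n"
    using assms(8) unfolding state_at_def by (metis le_add_diff_inverse2 add_diff_cancel_right')
  have "R_S G t = int (min (t * S) K)"
    unfolding R_S_def Sset_def st
    using sum_top_set_staircase[OF relay_staircase_aoi] greedy_selects_top_sets(1-3) greedy t
    by simp
  moreover have "R_U G t = (\<Sum>k\<in>{1..K}. snd (aoi G n) k - fst (aoi G n) k)"
    unfolding R_U_def Uset_def st
    using aoi_gaps_vanish_outside_selection[OF greedy] greedy_selects_top_sets(4)[OF greedy]
    by (intro sum.mono_neutral_left) auto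
  ultimately show ?thesis using aoi_total_gap[OF greedy] assms(6) t by simp
qed

end
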